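(* Let $n\ge 2$ and let $P\in\mathbb{R}^{n\times n}$ be a row-stochastic matrix with $p_{ii}=0$ and $p_{ij}\in[0,1]$ for all $i,j$, whose associated directed graph (edge $i\to j$ iff $p_{ij}>0$) is strongly connected. Let $\Delta_n=\{x\in\mathbb{R}^n: x\ge 0,\ \mathbb{1}_n^Tx=1\}$. (1) Let $a_i,b_i:[0,1]\to[0,1]$ ($i=1,\dots,n$) be real-analytic functions with $d_i(x_i):=1-a_i(x_i)-b_i(x_i)\neq 0$ (and $\ge 0$) for all $i$ and all $x_i\in[0,1]$. For $x\in\Delta_n$ set $A(x)=\mathrm{diag}(a_1(x_1),\dots,a_n(x_n))$, $B(x)=\mathrm{diag}(b_1(x_1),\dots,b_n(x_n))$, let $Z(x)$ be a doubly stochastic orthogonal matrix whose entries are continuous functions of $x$, and set $C(x)=(\mathbb{I}_n-A(x)-B(x))Z(x)$. Consider the self-appraisal dynamics $$x(s+1)=\big[(\mathbb{I}_n-A(x(s))-B(x(s))P)^{-1}C(x(s))\big]^T\mathbb{1}_n/n .$$ Define $$U(x)=\mathbb{1}_n\mathbb{1}_n^T/n-\big[\mathbb{I}_n-A(x)-B(x)\big]^{-1}B(x)(\mathbb{I}_n-P),$$ and let $u(x)^T$ denote the left eigenvector of $U(x)$ associated with eigenvalue $1$, normalized so that its entries sum to $1$. Then this dynamics is equivalent to $x(s+1)=F(x(s))$, where $F:\Delta_n\to\Delta_n$, $F(x)^T=u(x)^TZ(x)$, is a continuous map. (2) Let $a_i:[0,1]\to[0,1]$ ($i=1,\dots,n$)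 be real-analytic functions, $A(x)=\mathrm{diag}(a_1(x_1),\dots,a_n(x_n))$, and consider the dynamics $x(s+1)=v(x(s))$, where $v(x)\in\Delta_n$ is such that $v(x)^T$ is the left eigenvector of $A(x)+(\mathbb{I}_n-A(x))P$ associated with eigenvalue $1$. Let $p\in\Delta_n$ be such that $p^T$ is the dominant left eigenvector of $P$ (i.e. $p^TP=p^T$). Then this dynamics is equivalent to $x(s+1)=F(x(s))$, where $F:\Delta_n\to\Delta_n$ is the continuous map $$F(x)=\begin{cases} e_i, & \text{if } a_i(x_i)=1 \text{ for some } i,\\[2pt] \left(\dfrac{p_1}{1-a_1(x_1)},\dots,\dfrac{p_n}{1-a_n(x_n)}\right)^T\Big/\displaystyle\sum_{j=1}^n\frac{p_j}{1-a_j(x_j)}, & \text{otherwise.}\end{cases}$$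
   Context: $\mathbb{1}_n$ is the all-ones vector, $\mathbb{I}_n$ the identity matrix, $e_i$ the $i$-th standard basis vector, $\mathrm{diag}(\cdot)$ the diagonal matrix with the given diagonal entries. These dynamics model the evolution over a sequence of issues $s=0,1,2,\dots$ of agents' self-appraisals $x(s)\in\Delta_n$ (reflected appraisals), where in part (1) the opinions on each issue follow $y(t+1)=(A+BP)y(t)+Cy(0)$ and in part (2) they follow $y(t+1)=(A+(\mathbb{I}_n-A)P)y(t)$. In part (2) the paper implicitly assumes that for each $x\in\Delta_n$ at most one index $i$ satisfies $a_i(x_i)=1$ (so that the eigenvector $v(x)$ and the map $F$ are well defined). *)

theory Defs
  imports "HOL-Analysis.Analysis"
begin

definition prob_simplex :: "(real^'n::finite) set" where
  "prob_simplex = {x. (\<forall>i. 0 \<le> x $ i) \<and> (\<Sum>i\<in>UNIV. x $ i) = 1}"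

definition row_stochastic :: "real^'n^'n \<Rightarrow> bool" where
  "row_stochastic M \<longleftrightarrow> (\<forall>i j. 0 \<le> M $ i $ j) \<and> (\<forall>i. (\<Sum>j\<in>UNIV. M $ i $ j) = 1)"

definition doubly_stochastic :: "real^'n^'n \<Rightarrow> bool" where
  "doubly_stochastic M \<longleftrightarrow> row_stochastic M \<and> (\<forall>j. (\<Sum>i\<in>UNIV. M $ i $ j) = 1)"

definition strongly_connected_mat :: "real^'n^'n \<Rightarrow> bool" where
  "strongly_connected_mat M \<longleftrightarrow> (\<forall>i j. (i, j) \<in> {(k, l). 0 < M $ k $ l}\<^sup>*)"

definition real_analytic_on :: "(real \<Rightarrow> real) \<Rightarrow> real set \<Rightarrow> bool" where
  "real_analytic_on f S \<longleftrightarrow>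
     (\<forall>x\<in>S. \<exists>r>0. \<exists>c::nat \<Rightarrow> real. \<forall>y\<in>S. \<bar>y - x\<bar> < r \<longrightarrow> (\<lambda>k. c k * (y - x) ^ k) sums f y)"

definition diagm :: "('n::finite \<Rightarrow> real \<Rightarrow> real) \<Rightarrow> real^'n \<Rightarrow> real^'n^'n" where
  "diagm f x = (\<chi> i j. if i = j then f i (x $ i) else 0)"

definition ones_outer_n :: "real^'n::finite^'n" where
  "ones_outer_n = (\<chi> i j. 1 / real CARD('n))"

end

theory Submission
  imports Defs
begin

text \<open>
  Part (2): v (A + (I - A) P) = v says exactly that the vector with entries (1 - a_k) v_k is a
  nonnegative left eigenvector of P for eigenvalue 1.  By irreducibility such vectors are the
  multiples of the positive vector p, so v_k is proportional to p_k / (1 - a_k); clearing the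
  denominators gives weights that also cover the case a_i = 1 and are visibly continuous in x.

  Part (1): with D = I - A - B and M = I - A - B P, a vector u with entries summing to 1 is a
  left fixed point of U iff (u D^-1) M = 1^T/n.  Since M = (I - A)(I - \<Gamma> P) with
  \<Gamma> = diag(b_k / (1 - a_k)) < I, the matrix M is inverse-positive: z M \<ge> 0 implies z \<ge> 0.
  Hence M is invertible, u = (1^T/n M^-1) D is the unique normalized fixed point, it lies in the
  simplex, and G(x) = u Z(x).  Continuity follows from Cramer's rule.
\<close>

lemma vector_matrix_mult_nth: "(v v* M) $ j = (\<Sum>i\<in>UNIV. v $ i * M $ i $ j)"
  by (simp add: vector_matrix_mult_def)

lemma diagm_mult_nth: "(diagm f x ** Q) $ i $ j = f i (x $ i) * Q $ i $ j"
  by (simp add: diagm_def matrix_matrix_mult_def if_distrib if_distribR cong: if_cong)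

lemma vector_mult_diagm_nth: "(v v* diagm f x) $ j = v $ j * f j (x $ j)"
  by (simp add: diagm_def vector_matrix_mult_def if_distrib if_distribR cong: if_cong)

lemma diagm_mult_diagm: "diagm f x ** diagm g x = diagm (\<lambda>i s. f i s * g i s) x"
  by (simp add: vec_eq_iff diagm_mult_nth) (simp add: diagm_def)

lemma mat_1_minus_diagm: "mat 1 - diagm f x = diagm (\<lambda>i s. 1 - f i s) x"
  by (simp add: vec_eq_iff diagm_def mat_def)

lemma diagm_diff: "diagm f x - diagm g x = diagm (\<lambda>i s. f i s - g i s) x"
  by (simp add: vec_eq_iff diagm_def)

lemma matrix_inv_left:
  fixes A :: "real^'n^'n"
  assumes "invertible A"
  shows "matrix_inv A ** A = mat 1"
  using someI_ex[OF assms[unfolded invertible_def]] unfolding matrix_inv_def by auto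

lemma matrix_inv_right:
  fixes A :: "real^'n^'n"
  assumes "invertible A"
  shows "A ** matrix_inv A = mat 1"
  using someI_ex[OF assms[unfolded invertible_def]] unfolding matrix_inv_def by auto

lemma vector_matrix_mult_inv_cancel:
  fixes A :: "real^'n^'n"
  assumes "invertible A"
  shows "(z v* A) v* matrix_inv A = z" "(z v* matrix_inv A) v* A = z"
  by (simp_all only: vector_matrix_mul_assoc matrix_inv_left[OF assms] matrix_inv_right[OF assms]
      vector_matrix_mul_rid)

lemma invertible_diagm:
  assumes "\<And>i. f i (x $ i) \<noteq> 0"
  shows "invertible (diagm f x)"
  unfolding invertible_def
proof (intro exI conjI)
  show "diagm f x ** diagm (\<lambda>i s. 1 / f i s) x = mat 1"
    by (simp add: diagm_mult_diagm) (simp add: vec_eq_iff diagm_def mat_def assms)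
  show "diagm (\<lambda>i s. 1 / f i s) x ** diagm f x = mat 1"
    by (simp add: diagm_mult_diagm) (simp add: vec_eq_iff diagm_def mat_def assms)
qed

lemma continuous_on_det:
  fixes f :: "'a::topological_space \<Rightarrow> real^'n^'n"
  assumes "\<And>i j. continuous_on S (\<lambda>x. f x $ i $ j)"
  shows "continuous_on S (\<lambda>x. det (f x))"
  unfolding det_def
  by (intro continuous_on_sum continuous_on_mult continuous_on_const continuous_on_prod assms)

lemma continuous_on_vector_matrix_mult:
  fixes v :: "'a::topological_space \<Rightarrow> real^'n" and M :: "'a \<Rightarrow> real^'m^'n"
  assumes "\<And>i. continuous_on S (\<lambda>x. v x $ i)"
    and "\<And>i j. continuous_on S (\<lambda>x. M x $ i $ j)"
  shows "continuous_on S (\<lambda>x. v x v* M x)"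
  unfolding vector_matrix_mult_def
  by (intro continuous_on_vec_lambda continuous_on_sum continuous_on_mult assms)

lemma continuous_on_vector_matrix_inv:
  fixes M :: "'a::topological_space \<Rightarrow> real^'n^'n"
  assumes inv: "\<And>x. x \<in> S \<Longrightarrow> invertible (M x)"
    and cont: "\<And>i j. continuous_on S (\<lambda>x. M x $ i $ j)"
  shows "continuous_on S (\<lambda>x. (c v* matrix_inv (M x)) $ k)"
proof -
  let ?Mk = "\<lambda>x k. \<chi> i j. if j = k then c $ i else transpose (M x) $ i $ j"
  have cramer_rule: "(c v* matrix_inv (M x)) $ k = det (?Mk x k) / det (transpose (M x))"
    if x: "x \<in> S" for x
  proof -
    have "transpose (M x) *v (c v* matrix_inv (M x)) = c"
      by (simp add: vector_matrix_mult_inv_cancel(2)[OF inv[OF x]])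
    moreover have "det (transpose (M x)) \<noteq> 0"
      using inv[OF x] by (simp add: invertible_det_nz)
    ultimately have "c v* matrix_inv (M x) = (\<chi> k. det (?Mk x k) / det (transpose (M x)))"
      using cramer by blast
    then show ?thesis by simp
  qed
  have "continuous_on S (\<lambda>x. det (?Mk x k) / det (transpose (M x)))"
  proof (intro continuous_on_divide continuous_on_det)
    show "continuous_on S (\<lambda>x. transpose (M x) $ i $ j)" for i j
      unfolding transpose_def by (simp add: cont)
    show "continuous_on S (\<lambda>x. ?Mk x k $ i $ j)" for i j
      by (cases "j = k") (simp_all add: transpose_def cont)
  qed (simp add: inv flip: invertible_det_nz)
  then show ?thesis
    by (rule continuous_on_cong[THEN iffD1, rotated 2]) (simp_all add: cramer_rule)
qed

lemma real_analytic_on_imp_continuous_on: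
  assumes "real_analytic_on f S"
  shows "continuous_on S f"
  unfolding continuous_on_eq_continuous_within
proof
  fix x assume x: "x \<in> S"
  obtain r c where r: "r > 0"
    and sums: "\<And>y. y \<in> S \<Longrightarrow> \<bar>y - x\<bar> < r \<Longrightarrow>
      (\<lambda>k. c k * (y - x) ^ k) sums f y"
    using assms x unfolding real_analytic_on_def by blast
  show "continuous (at x within S) f"
  proof (cases "x islimpt S")
    case False
    then have "at x within S = bot" using trivial_limit_within by blast
    then show ?thesis by (simp add: continuous_within)
  next
    case True
    then obtain y where y: "y \<in> S" "y \<noteq> x" "\<bar>y - x\<bar> < r"
      using r unfolding islimpt_approachable dist_real_def by blast
    define g where "g y = (\<Sum>k. c k * (y - x) ^ k)" for y
    have "summable (\<lambda>k. c k * (y - x) ^ k)"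
      using sums[OF y(1,3)] by (rule sums_summable)
    then have powser_cont: "isCont (\<lambda>z. \<Sum>k. c k * z ^ k) 0"
      by (rule isCont_powser) (use y in auto)
    have "isCont g x"
      unfolding g_def
      by (rule isCont_o2[where f="\<lambda>y. y - x"])
        (auto intro!: continuous_intros simp: powser_cont)
    moreover have "f y = g y" if "y \<in> S" "\<bar>y - x\<bar> < r" for y
      using sums[OF that] unfolding g_def by (metis sums_unique)
    then have "\<forall>\<^sub>F y in at x within S. g y = f y" "g x = f x"
      using x r by (auto simp: eventually_at dist_real_def intro!: exI[of _ r])
    ultimately show ?thesis
      unfolding continuous_within
      by (metis (mono_tags) continuous_at_imp_continuous_within continuous_within tendsto_cong)
  qed
qed

lemma prob_simplex_nth_bounds:
  assumes "x \<in> prob_simplex"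
  shows "0 \<le> x $ i" "x $ i \<le> 1"
proof -
  have nonneg: "\<forall>i. 0 \<le> x $ i" and sum: "(\<Sum>i\<in>UNIV. x $ i) = 1"
    using assms by (auto simp: prob_simplex_def)
  show "0 \<le> x $ i" using nonneg by blast
  have "x $ i \<le> (\<Sum>i\<in>UNIV. x $ i)" by (rule member_le_sum) (auto simp: nonneg)
  then show "x $ i \<le> 1" using sum by simp
qed

lemma continuous_on_prob_simplex_nth_comp:
  assumes "continuous_on {0..1} f"
  shows "continuous_on prob_simplex (\<lambda>x::real^'n. f (x $ i))"
proof (rule continuous_on_compose2[OF assms])
  show "continuous_on prob_simplex (\<lambda>x::real^'n. x $ i)" by (intro continuous_intros)
  show "(\<lambda>x::real^'n. x $ i) ` prob_simplex \<subseteq> {0..1}"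
    using prob_simplex_nth_bounds by fastforce
qed

lemma prob_simplex_scaleR_inverse_sum:
  assumes "\<forall>k. 0 \<le> q $ k" "0 < (\<Sum>k\<in>UNIV. q $ k)"
  shows "(1 / (\<Sum>k\<in>UNIV. q $ k)) *\<^sub>R q \<in> prob_simplex"
  using assms by (simp add: prob_simplex_def sum_divide_distrib[symmetric])

lemma sum_vector_matrix_mult_row_stochastic:
  assumes "row_stochastic P"
  shows "(\<Sum>j\<in>UNIV. (v v* P) $ j) = (\<Sum>i\<in>UNIV. v $ i)"
proof -
  have "(\<Sum>j\<in>UNIV. (v v* P) $ j) = (\<Sum>i\<in>UNIV. v $ i * (\<Sum>j\<in>UNIV. P $ i $ j))"
    unfolding vector_matrix_mult_nth by (subst sum.swap) (simp add: sum_distrib_left)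
  then show ?thesis using assms by (simp add: row_stochastic_def)
qed

lemma sum_vector_matrix_mult_I_minus_stochastic:
  assumes "row_stochastic P"
  shows "(\<Sum>j\<in>UNIV. (v v* (mat 1 - P)) $ j) = 0"
  using sum_vector_matrix_mult_row_stochastic[OF assms, of v]
  by (simp add: vector_matrix_mult_diff_rdistrib sum_subtractf)

lemma prob_simplex_vector_matrix_mult:
  assumes "u \<in> prob_simplex" "row_stochastic P"
  shows "u v* P \<in> prob_simplex"
  using assms sum_vector_matrix_mult_row_stochastic[OF assms(2)]
  by (auto simp: prob_simplex_def row_stochastic_def vector_matrix_mult_nth intro!: sum_nonneg)

lemma nonneg_stationary_eq_0:
  fixes P :: "real^'n^'n"
  assumes P: "row_stochastic P" and sc: "strongly_connected_mat P"
    and nonneg: "\<forall>k. 0 \<le> u $ k" and stat: "u v* P = u" and zero: "u $ j = 0"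
  shows "u = 0"
proof -
  have "u $ i = 0" for i
  proof -
    have "(i, j) \<in> {(k, l). 0 < P $ k $ l}\<^sup>*"
      using sc unfolding strongly_connected_mat_def by blast
    then show ?thesis
    proof (induction rule: converse_rtrancl_induct)
      case base
      show ?case using zero .
    next
      case (step y z)
      have "u $ y * P $ y $ z \<le> (\<Sum>k\<in>UNIV. u $ k * P $ k $ z)"
        by (rule member_le_sum) (use nonneg P in \<open>auto simp: row_stochastic_def\<close>)
      also have "\<dots> = 0"
        using stat step.IH by (metis vector_matrix_mult_nth)
      finally have "u $ y \<le> 0"
        using step.hyps(1) by (simp add: mult_le_0_iff)
      then show ?case using nonneg by (meson order_antisym)
    qed
  qed
  then show ?thesis by (simp add: vec_eq_iff)
qed

lemma stationary_distribution_pos: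
  fixes P :: "real^'n^'n"
  assumes P: "row_stochastic P" and sc: "strongly_connected_mat P"
    and p: "p \<in> prob_simplex" and stat: "p v* P = p"
  shows "0 < p $ k"
proof (rule ccontr)
  assume "\<not> 0 < p $ k"
  then have "p $ k = 0" using prob_simplex_nth_bounds(1)[OF p, of k] by simp
  then have "p = 0" using nonneg_stationary_eq_0[OF P sc _ stat] p by (auto simp: prob_simplex_def)
  then show False using p by (simp add: prob_simplex_def)
qed

text \<open>Irreducibility makes the nonnegative left eigenvectors for eigenvalue 1 one-dimensional:
  subtracting the largest multiple of the positive vector p produces a zero entry.\<close>
lemma nonneg_stationary_eq_scaleR:
  fixes P :: "real^'n^'n"
  assumes P: "row_stochastic P" and sc: "strongly_connected_mat P"
    and p: "p \<in> prob_simplex" and p_stat: "p v* P = p"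
    and nonneg: "\<forall>k. 0 \<le> w $ k" and w_stat: "w v* P = w"
  shows "\<exists>c. w = c *\<^sub>R p"
proof -
  have pos: "\<And>k. 0 < p $ k" using stationary_distribution_pos[OF P sc p p_stat] .
  define c where "c = Min (range (\<lambda>k. w $ k / p $ k))"
  have "c \<in> range (\<lambda>k. w $ k / p $ k)" unfolding c_def by (rule Min_in) auto
  then obtain k0 where k0: "c = w $ k0 / p $ k0" by blast
  define u where "u = w - c *\<^sub>R p"
  have "\<forall>k. 0 \<le> u $ k"
  proof
    fix k
    have "c \<le> w $ k / p $ k" unfolding c_def by (rule Min_le) auto
    then show "0 \<le> u $ k" using pos[of k] by (simp add: u_def pos_le_divide_eq)
  qed
  moreover have "u v* P = u"
    by (simp add: u_def vector_matrix_mult_diff_distrib scaleR_vector_matrix_assoc w_stat p_stat)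
  moreover have "u $ k0 = 0" using k0 pos[of k0] by (simp add: u_def)
  ultimately have "u = 0" by (rule nonneg_stationary_eq_0[OF P sc])
  then show ?thesis by (auto simp: u_def)
qed

text \<open>The negative part n of y satisfies n \<le> (\<Gamma> n) P componentwise; summing over
  all components gives \<Sum>k. n k (1 - \<gamma> k) \<le> 0, so n = 0.\<close>
lemma inverse_positive_I_minus_scaled_stochastic:
  fixes P :: "real^'n^'n" and y \<gamma> :: "'n \<Rightarrow> real"
  assumes P: "row_stochastic P"
    and \<gamma>: "\<And>k. 0 \<le> \<gamma> k" "\<And>k. \<gamma> k < 1"
    and image_nonneg: "\<And>j. 0 \<le> y j - (\<Sum>k\<in>UNIV. y k * \<gamma> k * P $ k $ j)"
  shows "0 \<le> y k"
proof -
  define n where "n k = max 0 (- y k)" for k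
  have n_nonneg: "0 \<le> n k" for k by (simp add: n_def)
  have P_nonneg: "0 \<le> P $ k $ j" for k j using P by (simp add: row_stochastic_def)
  have n_le: "n j \<le> (\<Sum>k\<in>UNIV. n k * \<gamma> k * P $ k $ j)" for j
  proof -
    have "- y j \<le> (\<Sum>k\<in>UNIV. (- y k) * \<gamma> k * P $ k $ j)"
      using image_nonneg[of j] by (simp add: sum_negf)
    also have "\<dots> \<le> (\<Sum>k\<in>UNIV. n k * \<gamma> k * P $ k $ j)"
      by (intro sum_mono mult_right_mono) (auto simp: n_def \<gamma> P_nonneg)
    finally show ?thesis
      using sum_nonneg[of UNIV "\<lambda>k. n k * \<gamma> k * P $ k $ j"]
      by (simp add: n_def n_nonneg \<gamma> P_nonneg)
  qed
  have "(\<Sum>j\<in>UNIV. n j)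
      \<le> (\<Sum>j\<in>UNIV. \<Sum>k\<in>UNIV. n k * \<gamma> k * P $ k $ j)"
    by (rule sum_mono) (rule n_le)
  also have "\<dots> = (\<Sum>k\<in>UNIV. n k * \<gamma> k * (\<Sum>j\<in>UNIV. P $ k $ j))"
    by (subst sum.swap) (simp add: sum_distrib_left)
  also have "\<dots> = (\<Sum>k\<in>UNIV. n k * \<gamma> k)"
    using P by (simp add: row_stochastic_def)
  finally have "(\<Sum>k\<in>UNIV. n k * (1 - \<gamma> k)) \<le> 0"
    by (simp add: algebra_simps sum_subtractf)
  moreover have terms_nonneg: "\<forall>k. 0 \<le> n k * (1 - \<gamma> k)"
    using n_nonneg \<gamma>(2) by (simp add: less_imp_le)
  ultimately have "(\<Sum>k\<in>UNIV. n k * (1 - \<gamma> k)) = 0"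
    by (meson order_antisym sum_nonneg)
  then have "n k * (1 - \<gamma> k) = 0"
    using sum_nonneg_eq_0_iff[of UNIV "\<lambda>k. n k * (1 - \<gamma> k)"] terms_nonneg by simp
  then have "n k = 0" using \<gamma>(2)[of k] by simp
  then show ?thesis by (simp add: n_def)
qed

section \<open>The DeGroot-Friedkin map\<close>

lemma lazy_stationary_iff:
  "v v* (diagm a x + (mat 1 - diagm a x) ** P) = v \<longleftrightarrow>
   (\<chi> k. (1 - a k (x $ k)) * v $ k) v* P = (\<chi> k. (1 - a k (x $ k)) * v $ k)"
proof -
  define w where "w = v v* (mat 1 - diagm a x)"
  have split: "v v* (diagm a x + (mat 1 - diagm a x) ** P) = v - w + w v* P"
    by (simp add: w_def vector_matrix_mult_add_rdistrib vector_matrix_mul_assoc[symmetric]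
        vector_matrix_mult_diff_rdistrib)
  have "w = (\<chi> k. (1 - a k (x $ k)) * v $ k)"
    by (simp add: w_def mat_1_minus_diagm vec_eq_iff vector_mult_diagm_nth mult.commute)
  then show ?thesis
    unfolding split by (metis add_diff_cancel_left' diff_add_cancel)
qed

text \<open>The vector p_k / (1 - a_k(x_k)) multiplied by the common factor
  \<Prod>_l (1 - a_l(x_l)); unlike the quotients it stays meaningful when some a_i(x_i) = 1.\<close>
definition stationary_weights ::
    "real^'n \<Rightarrow> ('n \<Rightarrow> real \<Rightarrow> real) \<Rightarrow> real^'n \<Rightarrow> real^'n" where
  "stationary_weights p a x = (\<chi> k. p $ k * (\<Prod>l\<in>UNIV - {k}. 1 - a l (x $ l)))"

lemma one_minus_mult_stationary_weights:
  "(1 - a k (x $ k)) * stationary_weights p a x $ k = (\<Prod>l\<in>UNIV. 1 - a l (x $ l)) * p $ k"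
  unfolding stationary_weights_def by (simp add: prod.remove[of UNIV k])

lemma stationary_weights_eq_0:
  assumes "a i (x $ i) = 1" "k \<noteq> i"
  shows "stationary_weights p a x $ k = 0"
  using assms unfolding stationary_weights_def by (auto intro!: bexI[of _ i])

lemma continuous_on_stationary_weights:
  assumes "\<And>l. continuous_on S (\<lambda>x. a l (x $ l))"
  shows "continuous_on S (stationary_weights p a)"
  unfolding stationary_weights_def by (intro continuous_intros assms)

context
  fixes P :: "real^'n^'n" and p :: "real^'n"
    and a :: "'n \<Rightarrow> real \<Rightarrow> real" and x :: "real^'n"
  assumes P: "row_stochastic P" and sc: "strongly_connected_mat P"
    and p: "p \<in> prob_simplex" and p_stat: "p v* P = p"
    and a_range: "\<And>l. 0 \<le> a l (x $ l) \<and> a l (x $ l) \<le> 1"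
    and a_one_unique:
      "\<And>i j. a i (x $ i) = 1 \<Longrightarrow> a j (x $ j) = 1 \<Longrightarrow> i = j"
begin

lemma stationary_weights_nonneg: "0 \<le> stationary_weights p a x $ k"
  using prob_simplex_nth_bounds(1)[OF p] a_range
  unfolding stationary_weights_def by (auto intro!: mult_nonneg_nonneg prod_nonneg)

lemma stationary_weights_pos:
  assumes "\<And>l. l \<noteq> k \<Longrightarrow> a l (x $ l) < 1"
  shows "0 < stationary_weights p a x $ k"
proof -
  have "0 < (\<Prod>l\<in>UNIV - {k}. 1 - a l (x $ l))" using assms by (intro prod_pos) simp
  then show ?thesis
    using stationary_distribution_pos[OF P sc p p_stat] unfolding stationary_weights_def by simp
qed

lemma sum_stationary_weights_pos: "0 < (\<Sum>k\<in>UNIV. stationary_weights p a x $ k)"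
proof -
  obtain k where k: "\<And>l. l \<noteq> k \<Longrightarrow> a l (x $ l) < 1"
    using a_range a_one_unique by (metis less_eq_real_def)
  have "0 < stationary_weights p a x $ k" by (rule stationary_weights_pos[OF k])
  also have "\<dots> \<le> (\<Sum>k\<in>UNIV. stationary_weights p a x $ k)"
    by (rule member_le_sum) (auto simp: stationary_weights_nonneg)
  finally show ?thesis .
qed

lemma normalized_stationary_weights_eq:
  "(if \<exists>i. a i (x $ i) = 1 then axis (THE i. a i (x $ i) = 1) 1
    else (1 / (\<Sum>j\<in>UNIV. p $ j / (1 - a j (x $ j))))
      *\<^sub>R (\<chi> i. p $ i / (1 - a i (x $ i))))
   = (1 / (\<Sum>k\<in>UNIV. stationary_weights p a x $ k)) *\<^sub>R stationary_weights p a x"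
  (is "_ = (1 / ?S) *\<^sub>R ?q")
proof (cases "\<exists>i. a i (x $ i) = 1")
  case True
  then obtain i where i: "a i (x $ i) = 1" by blast
  have the_i: "(THE i. a i (x $ i) = 1) = i" using a_one_unique i by blast
  have sum_eq: "?S = ?q $ i"
    using stationary_weights_eq_0[of a i x, OF i] by (simp add: sum.remove[of UNIV i])
  have "0 < ?q $ i"
    using a_one_unique[OF i] a_range by (intro stationary_weights_pos) (metis less_eq_real_def)
  then show ?thesis
    using True stationary_weights_eq_0[of a i x, OF i]
    by (simp add: the_i sum_eq vec_eq_iff axis_def)
next
  case False
  let ?pr = "\<Prod>l\<in>UNIV. 1 - a l (x $ l)"
  have lt: "a l (x $ l) < 1" for l using False a_range[of l] by (auto simp: less_eq_real_def)
  have "0 < ?pr" using lt by (intro prod_pos) auto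
  moreover have q: "?q $ k = ?pr * (p $ k / (1 - a k (x $ k)))" for k
    using one_minus_mult_stationary_weights[of a k x p] lt[of k] by (simp add: field_simps)
  moreover have "?S = ?pr * (\<Sum>j\<in>UNIV. p $ j / (1 - a j (x $ j)))"
    unfolding q by (simp add: sum_distrib_left)
  ultimately show ?thesis
    using False by (simp add: vec_eq_iff q)
qed

lemma scaled_eq_stationary_imp_proportional_weights:
  assumes c: "(\<chi> k. (1 - a k (x $ k)) * v $ k) = c *\<^sub>R p"
  shows "\<exists>s. v = s *\<^sub>R stationary_weights p a x"
proof -
  let ?q = "stationary_weights p a x" and ?pr = "\<Prod>l\<in>UNIV. 1 - a l (x $ l)"
  have c_k: "(1 - a k (x $ k)) * v $ k = c * p $ k" for k
    using c by (simp add: vec_eq_iff)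
  have key: "?pr * v $ k = c * ?q $ k" for k
  proof -
    have "?pr = (1 - a k (x $ k)) * (\<Prod>l\<in>UNIV - {k}. 1 - a l (x $ l))"
      by (simp add: prod.remove[of UNIV k])
    then show ?thesis using c_k[of k] by (simp add: stationary_weights_def)
  qed
  show ?thesis
  proof (cases "?pr = 0")
    case False
    then have "v = (c / ?pr) *\<^sub>R ?q" using key by (simp add: vec_eq_iff field_simps)
    then show ?thesis ..
  next
    case True
    then obtain i where i: "a i (x $ i) = 1" by auto
    have lt: "a k (x $ k) < 1" if "k \<noteq> i" for k
      using a_one_unique[OF i] a_range[of k] that by (metis less_eq_real_def)
    have q_i: "0 < ?q $ i" by (rule stationary_weights_pos) (use lt in blast)
    then have "c = 0" using key[of i] True by simp
    then have v_0: "v $ k = 0" if "k \<noteq> i" for k using c_k[of k] lt[OF that] by simp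
    have "v = (v $ i / ?q $ i) *\<^sub>R ?q"
      unfolding vec_eq_iff
    proof
      show "v $ k = ((v $ i / ?q $ i) *\<^sub>R ?q) $ k" for k
        using q_i v_0 stationary_weights_eq_0[of a i x, OF i] by (cases "k = i") auto
    qed
    then show ?thesis ..
  qed
qed

lemma lazy_stationary_iff_normalized_weights:
  assumes v: "v \<in> prob_simplex"
  shows "v v* (diagm a x + (mat 1 - diagm a x) ** P) = v \<longleftrightarrow>
     v = (1 / (\<Sum>k\<in>UNIV. stationary_weights p a x $ k)) *\<^sub>R stationary_weights p a x"
  (is "_ \<longleftrightarrow> v = (1 / ?S) *\<^sub>R ?q")
proof -
  let ?w = "\<lambda>v. \<chi> k. (1 - a k (x $ k)) * v $ k"
  have "v v* (diagm a x + (mat 1 - diagm a x) ** P) = v \<longleftrightarrow> ?w v v* P = ?w v"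
    by (rule lazy_stationary_iff)
  also have "\<dots> \<longleftrightarrow> v = (1 / ?S) *\<^sub>R ?q"
  proof
    assume stat: "?w v v* P = ?w v"
    have "\<forall>k. 0 \<le> ?w v $ k"
      using a_range prob_simplex_nth_bounds(1)[OF v] by simp
    then obtain c where "?w v = c *\<^sub>R p"
      using nonneg_stationary_eq_scaleR[OF P sc p p_stat _ stat] by blast
    then obtain s where s: "v = s *\<^sub>R ?q"
      using scaled_eq_stationary_imp_proportional_weights by blast
    have "1 = s * ?S"
      using v unfolding s by (simp add: prob_simplex_def sum_distrib_left)
    then show "v = (1 / ?S) *\<^sub>R ?q"
      using s sum_stationary_weights_pos by (simp add: field_simps)
  next
    assume v_eq: "v = (1 / ?S) *\<^sub>R ?q"
    have "?w v = ((\<Prod>l\<in>UNIV. 1 - a l (x $ l)) / ?S) *\<^sub>R p"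
      using one_minus_mult_stationary_weights[of a _ x p] by (simp add: v_eq vec_eq_iff)
    then show "?w v v* P = ?w v" by (simp add: scaleR_vector_matrix_assoc p_stat)
  qed
  finally show ?thesis .
qed

end

lemma degroot_self_appraisal_map:
  fixes P :: "real^'n^'n" and a :: "'n \<Rightarrow> real \<Rightarrow> real" and p :: "real^'n"
  assumes P: "row_stochastic P" and sc: "strongly_connected_mat P"
    and a: "\<forall>i. real_analytic_on (a i) {0..1} \<and> (\<forall>t\<in>{0..1}. a i t \<in> {0..1})"
    and a_one_unique:
      "\<forall>x\<in>prob_simplex. \<forall>i j. a i (x $ i) = 1 \<and> a j (x $ j) = 1 \<longrightarrow> i = j"
    and p: "p \<in> prob_simplex" and p_stat: "p v* P = p"
  shows "let F = (\<lambda>x. if \<exists>i. a i (x $ i) = 1 then axis (THE i. a i (x $ i) = 1) 1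
                    else (1 / (\<Sum>j\<in>UNIV. p $ j / (1 - a j (x $ j))))
                         *\<^sub>R (\<chi> i. p $ i / (1 - a i (x $ i))))
       in (\<forall>x\<in>prob_simplex. F x \<in> prob_simplex \<and>
             (\<forall>v\<in>prob_simplex.
                v v* (diagm a x + (mat 1 - diagm a x) ** P) = v \<longleftrightarrow> v = F x))
          \<and> continuous_on prob_simplex F"
proof -
  define F where
    "F = (\<lambda>x. if \<exists>i. a i (x $ i) = 1 then axis (THE i. a i (x $ i) = 1) 1
                    else (1 / (\<Sum>j\<in>UNIV. p $ j / (1 - a j (x $ j))))
                         *\<^sub>R (\<chi> i. p $ i / (1 - a i (x $ i))))"
  let ?q = "stationary_weights p a"
  let ?S = "\<lambda>x. \<Sum>k\<in>UNIV. stationary_weights p a x $ k"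
  have F_eq: "F x = (1 / ?S x) *\<^sub>R ?q x"
    and S_pos: "0 < ?S x"
    and F_in: "F x \<in> prob_simplex"
    and F_stat: "\<forall>v\<in>prob_simplex.
      v v* (diagm a x + (mat 1 - diagm a x) ** P) = v \<longleftrightarrow> v = F x"
    if x: "x \<in> prob_simplex" for x
  proof -
    have a_range: "0 \<le> a l (x $ l) \<and> a l (x $ l) \<le> 1" for l
      using a prob_simplex_nth_bounds[OF x, of l] by auto
    have a_one: "i = j" if "a i (x $ i) = 1" "a j (x $ j) = 1" for i j
      using a_one_unique x that by blast
    note weights = normalized_stationary_weights_eq sum_stationary_weights_pos
      stationary_weights_nonneg lazy_stationary_iff_normalized_weights
    note weights_at_x = weights[where a = a and x = x, OF P sc p p_stat a_range a_one]
    show F_eq: "F x = (1 / ?S x) *\<^sub>R ?q x"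
      unfolding F_def by (rule weights_at_x(1))
    show "0 < ?S x" by (rule weights_at_x(2))
    then show "F x \<in> prob_simplex"
      unfolding F_eq by (intro prob_simplex_scaleR_inverse_sum weights_at_x(3) allI)
    show "\<forall>v\<in>prob_simplex.
      v v* (diagm a x + (mat 1 - diagm a x) ** P) = v \<longleftrightarrow> v = F x"
      unfolding F_eq using weights_at_x(4) by blast
  qed
  have "continuous_on prob_simplex (\<lambda>x. a l (x $ l))" for l
    using a by (intro continuous_on_prob_simplex_nth_comp real_analytic_on_imp_continuous_on) blast
  then have "continuous_on prob_simplex ?q" by (rule continuous_on_stationary_weights)
  then have "continuous_on prob_simplex (\<lambda>x. (1 / ?S x) *\<^sub>R ?q x)"
    using S_pos by (intro continuous_intros) (auto simp: less_imp_neq[symmetric])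
  then have "continuous_on prob_simplex F"
    by (rule continuous_on_cong[THEN iffD1, rotated 2]) (simp_all add: F_eq)
  then show ?thesis
    using F_in F_stat unfolding Let_def F_def by blast
qed

section \<open>The Friedkin-Johnsen map\<close>

abbreviation uniform_vector :: "real^'n::finite" where
  "uniform_vector \<equiv> \<chi> i. 1 / real CARD('n)"

lemma vector_mult_ones_outer_n:
  assumes "(\<Sum>i\<in>UNIV. u $ i) = 1"
  shows "u v* ones_outer_n = uniform_vector"
  using assms
  by (simp add: vec_eq_iff vector_matrix_mult_nth ones_outer_n_def sum_divide_distrib[symmetric])

abbreviation innate_matrix ::
    "('n \<Rightarrow> real \<Rightarrow> real) \<Rightarrow> ('n \<Rightarrow> real \<Rightarrow> real) \<Rightarrow> real^'n \<Rightarrow> real^'n^'n" where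
  "innate_matrix a b x \<equiv> mat 1 - diagm a x - diagm b x"

abbreviation opinion_matrix ::
    "real^'n^'n \<Rightarrow> ('n \<Rightarrow> real \<Rightarrow> real) \<Rightarrow> ('n \<Rightarrow> real \<Rightarrow> real) \<Rightarrow> real^'n \<Rightarrow> real^'n^'n" where
  "opinion_matrix P a b x \<equiv> mat 1 - diagm a x - diagm b x ** P"

abbreviation appraisal_weights ::
    "real^'n^'n \<Rightarrow> ('n \<Rightarrow> real \<Rightarrow> real) \<Rightarrow> ('n \<Rightarrow> real \<Rightarrow> real) \<Rightarrow> real^'n \<Rightarrow> real^'n" where
  "appraisal_weights P a b x \<equiv>
     (uniform_vector v* matrix_inv (opinion_matrix P a b x)) v* innate_matrix a b x"

abbreviation appraisal_matrix ::
    "real^'n^'n \<Rightarrow> ('n \<Rightarrow> real \<Rightarrow> real) \<Rightarrow> ('n \<Rightarrow> real \<Rightarrow> real) \<Rightarrow> real^'n \<Rightarrow> real^'n^'n" where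
  "appraisal_matrix P a b x \<equiv>
     ones_outer_n - matrix_inv (innate_matrix a b x) ** diagm b x ** (mat 1 - P)"

lemma opinion_matrix_nth:
  "opinion_matrix P a b x $ k $ j
     = (if k = j then 1 - a k (x $ k) else 0) - b k (x $ k) * P $ k $ j"
  by (simp add: diagm_mult_nth) (simp add: diagm_def mat_def)

lemma vector_opinion_matrix_nth:
  "(z v* opinion_matrix P a b x) $ j
     = z $ j * (1 - a j (x $ j)) - (\<Sum>k\<in>UNIV. z $ k * b k (x $ k) * P $ k $ j)"
proof -
  have "(z v* opinion_matrix P a b x) $ j
      = (\<Sum>k\<in>UNIV. (if k = j then z $ j * (1 - a j (x $ j)) else 0)
          - z $ k * b k (x $ k) * P $ k $ j)"
    unfolding vector_matrix_mult_nth opinion_matrix_nth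
    by (rule sum.cong) (auto simp: algebra_simps)
  then show ?thesis by (simp add: sum_subtractf)
qed

lemma innate_matrix_eq_diagm: "innate_matrix a b x = diagm (\<lambda>i s. 1 - a i s - b i s) x"
  by (simp add: mat_1_minus_diagm diagm_diff)

lemma opinion_matrix_eq: "opinion_matrix P a b x = innate_matrix a b x + diagm b x ** (mat 1 - P)"
proof -
  have "opinion_matrix P a b x $ k $ j
      = (innate_matrix a b x + diagm b x ** (mat 1 - P)) $ k $ j" for k j
    unfolding opinion_matrix_nth innate_matrix_eq_diagm vector_add_component diagm_mult_nth
    by (simp add: diagm_def mat_def algebra_simps)
  then show ?thesis by (metis vec_eq_iff)
qed

context
  fixes P :: "real^'n^'n" and a b :: "'n \<Rightarrow> real \<Rightarrow> real" and x :: "real^'n"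
  assumes P: "row_stochastic P"
    and ab_range: "\<And>k. 0 \<le> a k (x $ k) \<and> 0 \<le> b k (x $ k) \<and> a k (x $ k) + b k (x $ k) < 1"
begin

lemma nonneg_if_vector_opinion_matrix_nonneg:
  assumes "\<And>j. 0 \<le> (z v* opinion_matrix P a b x) $ j"
  shows "0 \<le> z $ k"
proof -
  define y where "y k = z $ k * (1 - a k (x $ k))" for k
  define \<gamma> where "\<gamma> k = b k (x $ k) / (1 - a k (x $ k))" for k
  have a_lt: "0 < 1 - a k (x $ k)" for k using ab_range[of k] by linarith
  have \<gamma>_nonneg: "0 \<le> \<gamma> k" for k
    using ab_range[of k] a_lt[of k] unfolding \<gamma>_def by simp
  have \<gamma>_lt: "\<gamma> k < 1" for k
    using ab_range[of k] a_lt[of k] unfolding \<gamma>_def by (simp add: divide_less_eq)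
  have y_\<gamma>: "y k * \<gamma> k = z $ k * b k (x $ k)" for k
    using a_lt[of k] unfolding y_def \<gamma>_def by (simp add: field_simps)
  have image: "y j - (\<Sum>k\<in>UNIV. y k * \<gamma> k * P $ k $ j) = (z v* opinion_matrix P a b x) $ j" for j
    unfolding vector_opinion_matrix_nth y_\<gamma> by (simp only: y_def)
  have "0 \<le> y k"
    by (rule inverse_positive_I_minus_scaled_stochastic[where P = P and y = y and \<gamma> = \<gamma>])
      (simp_all only: P \<gamma>_nonneg \<gamma>_lt image assms)
  then show ?thesis using a_lt[of k] by (simp add: y_def zero_le_mult_iff)
qed

lemma invertible_opinion_matrix: "invertible (opinion_matrix P a b x)"
proof -
  have "z = 0" if z: "z v* opinion_matrix P a b x = 0" for z
  proof -
    have "(- z) v* opinion_matrix P a b x = 0"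
      using vector_matrix_mult_diff_distrib[of 0 z "opinion_matrix P a b x"] z by simp
    then have "0 \<le> z $ k" "0 \<le> (- z) $ k" for k
      using z by (simp_all only: nonneg_if_vector_opinion_matrix_nonneg zero_index order_refl)
    then show ?thesis by (simp add: vec_eq_iff order_antisym)
  qed
  then have "\<exists>B. B ** transpose (opinion_matrix P a b x) = mat 1"
    by (simp add: matrix_left_invertible_ker)
  then show ?thesis
    by (simp add: left_invertible_transpose invertible_right_inverse)
qed

lemma invertible_innate_matrix: "invertible (innate_matrix a b x)"
proof -
  have "1 - a i (x $ i) - b i (x $ i) \<noteq> 0" for i using ab_range[of i] by linarith
  then show ?thesis unfolding innate_matrix_eq_diagm by (rule invertible_diagm)
qed

lemma sum_vector_opinion_matrix:
  "(\<Sum>j\<in>UNIV. (z v* opinion_matrix P a b x) $ j) = (\<Sum>j\<in>UNIV. (z v* innate_matrix a b x) $ j)"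
  using sum_vector_matrix_mult_I_minus_stochastic[OF P, of "z v* diagm b x"]
  unfolding opinion_matrix_eq
  by (simp add: vector_matrix_mult_add_rdistrib vector_matrix_mul_assoc sum.distrib)

lemma appraisal_weights_nonneg: "0 \<le> appraisal_weights P a b x $ k"
proof -
  have "0 \<le> (uniform_vector v* matrix_inv (opinion_matrix P a b x)) $ k"
    by (rule nonneg_if_vector_opinion_matrix_nonneg)
      (simp add: vector_matrix_mult_inv_cancel(2)[OF invertible_opinion_matrix])
  moreover have "0 \<le> 1 - a k (x $ k) - b k (x $ k)" using ab_range[of k] by linarith
  ultimately show ?thesis
    unfolding innate_matrix_eq_diagm vector_mult_diagm_nth by simp
qed

lemma sum_appraisal_weights: "(\<Sum>k\<in>UNIV. appraisal_weights P a b x $ k) = 1"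
  using sum_vector_opinion_matrix[of "uniform_vector v* matrix_inv (opinion_matrix P a b x)"]
  by (simp add: vector_matrix_mult_inv_cancel(2)[OF invertible_opinion_matrix])

lemma appraisal_weights_in_prob_simplex: "appraisal_weights P a b x \<in> prob_simplex"
  unfolding prob_simplex_def using appraisal_weights_nonneg sum_appraisal_weights by blast

lemma fixed_point_iff_opinion_equation:
  assumes u_sum: "(\<Sum>i\<in>UNIV. u $ i) = 1"
  shows "u v* appraisal_matrix P a b x = u
     \<longleftrightarrow> (u v* matrix_inv (innate_matrix a b x)) v* opinion_matrix P a b x = uniform_vector"
proof -
  define y where "y = u v* (matrix_inv (innate_matrix a b x) ** diagm b x ** (mat 1 - P))"
  have opinion: "(u v* matrix_inv (innate_matrix a b x)) v* opinion_matrix P a b x = u + y"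
    unfolding opinion_matrix_eq vector_matrix_mult_add_rdistrib y_def
      vector_matrix_mult_inv_cancel(2)[OF invertible_innate_matrix]
    by (simp add: vector_matrix_mul_assoc matrix_mul_assoc)
  have fixed: "u v* appraisal_matrix P a b x
      = uniform_vector - y"
    unfolding y_def vector_matrix_mult_diff_rdistrib vector_mult_ones_outer_n[OF u_sum] ..
  show ?thesis
    unfolding opinion fixed by (metis add_diff_cancel_right' diff_add_cancel)
qed

lemma normalized_fixed_point_iff_appraisal_weights:
  "u v* appraisal_matrix P a b x = u
     \<and> (\<Sum>i\<in>UNIV. u $ i) = 1 \<longleftrightarrow> u = appraisal_weights P a b x"
proof
  assume "u v* appraisal_matrix P a b x = u
     \<and> (\<Sum>i\<in>UNIV. u $ i) = 1"
  then have opinion: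
    "(u v* matrix_inv (innate_matrix a b x)) v* opinion_matrix P a b x = uniform_vector"
    using fixed_point_iff_opinion_equation by blast
  have "u v* matrix_inv (innate_matrix a b x)
      = ((u v* matrix_inv (innate_matrix a b x)) v* opinion_matrix P a b x)
          v* matrix_inv (opinion_matrix P a b x)"
    by (rule vector_matrix_mult_inv_cancel(1)[OF invertible_opinion_matrix, symmetric])
  also have "\<dots> = uniform_vector v* matrix_inv (opinion_matrix P a b x)"
    by (simp only: opinion)
  finally have u_inv:
    "u v* matrix_inv (innate_matrix a b x) = uniform_vector v* matrix_inv (opinion_matrix P a b x)" .
  have "u = (u v* matrix_inv (innate_matrix a b x)) v* innate_matrix a b x"
    by (rule vector_matrix_mult_inv_cancel(2)[OF invertible_innate_matrix, symmetric])
  also have "\<dots> = appraisal_weights P a b x"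
    by (simp only: u_inv)
  finally show "u = appraisal_weights P a b x" .
next
  assume u: "u = appraisal_weights P a b x"
  then have
    "u v* matrix_inv (innate_matrix a b x) = uniform_vector v* matrix_inv (opinion_matrix P a b x)"
    by (simp only: vector_matrix_mult_inv_cancel(1)[OF invertible_innate_matrix])
  then have "(u v* matrix_inv (innate_matrix a b x)) v* opinion_matrix P a b x = uniform_vector"
    by (simp only: vector_matrix_mult_inv_cancel(2)[OF invertible_opinion_matrix])
  then show "u v* appraisal_matrix P a b x = u
     \<and> (\<Sum>i\<in>UNIV. u $ i) = 1"
    using fixed_point_iff_opinion_equation sum_appraisal_weights u by blast
qed

end

lemma continuous_on_appraisal_weights:
  assumes P: "row_stochastic P"
    and ab_range: "\<And>x k. x \<in> S \<Longrightarrow>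
      0 \<le> a k (x $ k) \<and> 0 \<le> b k (x $ k) \<and> a k (x $ k) + b k (x $ k) < 1"
    and a_cont: "\<And>k. continuous_on S (\<lambda>x. a k (x $ k))"
    and b_cont: "\<And>k. continuous_on S (\<lambda>x. b k (x $ k))"
  shows "continuous_on S (appraisal_weights P a b)"
proof (rule continuous_on_vector_matrix_mult)
  have "continuous_on S (\<lambda>x. opinion_matrix P a b x $ i $ j)" for i j
    unfolding opinion_matrix_nth by (cases "i = j") (auto intro!: continuous_intros a_cont b_cont)
  then show
    "continuous_on S (\<lambda>x. (uniform_vector v* matrix_inv (opinion_matrix P a b x)) $ k)" for k
    using invertible_opinion_matrix[where a = a and b = b, OF P ab_range]
    by (intro continuous_on_vector_matrix_inv) auto
  show "continuous_on S (\<lambda>x. innate_matrix a b x $ i $ j)" for i j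
    by (cases "i = j") (auto intro!: continuous_intros a_cont b_cont simp: diagm_def mat_def)
qed

lemma friedkin_johnsen_self_appraisal_map:
  fixes P :: "real^'n^'n" and a b :: "'n \<Rightarrow> real \<Rightarrow> real" and Z :: "real^'n \<Rightarrow> real^'n^'n"
  assumes P: "row_stochastic P"
    and ab: "\<forall>i. real_analytic_on (a i) {0..1} \<and> real_analytic_on (b i) {0..1}
           \<and> (\<forall>t\<in>{0..1}. a i t \<in> {0..1} \<and> b i t \<in> {0..1}
                \<and> 1 - a i t - b i t \<noteq> 0 \<and> 1 - a i t - b i t \<ge> 0)"
    and Z: "\<forall>x\<in>prob_simplex. doubly_stochastic (Z x) \<and> orthogonal_matrix (Z x)"
    and Z_cont: "\<forall>i j. continuous_on prob_simplex (\<lambda>x. Z x $ i $ j)"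
  shows "let G = (\<lambda>x. transpose (matrix_inv (mat 1 - diagm a x - diagm b x ** P)
                                 ** ((mat 1 - diagm a x - diagm b x) ** Z x))
                     *v (\<chi> i. 1 / real CARD('n)));
           U = (\<lambda>x. ones_outer_n - matrix_inv (mat 1 - diagm a x - diagm b x) ** diagm b x
                      ** (mat 1 - P));
           F = (\<lambda>x. (THE u. u v* U x = u \<and> (\<Sum>i\<in>UNIV. u $ i) = 1) v* Z x)
       in (\<forall>x\<in>prob_simplex. (\<exists>!u. u v* U x = u \<and> (\<Sum>i\<in>UNIV. u $ i) = 1)
                        \<and> G x = F x \<and> F x \<in> prob_simplex)
          \<and> continuous_on prob_simplex F"
proof -
  define G where "G = (\<lambda>x. transpose (matrix_inv (opinion_matrix P a b x)
    ** (innate_matrix a b x ** Z x)) *v uniform_vector)"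
  define U where "U = appraisal_matrix P a b"
  define F where "F = (\<lambda>x. (THE u. u v* U x = u \<and> (\<Sum>i\<in>UNIV. u $ i) = 1) v* Z x)"
  have ab_range: "0 \<le> a k (x $ k) \<and> 0 \<le> b k (x $ k) \<and> a k (x $ k) + b k (x $ k) < 1"
    if "x \<in> prob_simplex" for x k
  proof -
    have "x $ k \<in> {0..1}" using prob_simplex_nth_bounds[OF that, of k] by simp
    then have "a k (x $ k) \<in> {0..1}" "b k (x $ k) \<in> {0..1}"
      "1 - a k (x $ k) - b k (x $ k) \<noteq> 0" "1 - a k (x $ k) - b k (x $ k) \<ge> 0"
      using ab by blast+
    then show ?thesis by auto
  qed
  have fixed_point_iff: "u v* U x = u \<and> (\<Sum>i\<in>UNIV. u $ i) = 1 \<longleftrightarrow> u = appraisal_weights P a b x"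
    if "x \<in> prob_simplex" for x u
    unfolding U_def
    by (rule normalized_fixed_point_iff_appraisal_weights[where a = a and b = b,
          OF P ab_range[OF that]])
  have F_eq: "F x = appraisal_weights P a b x v* Z x" if "x \<in> prob_simplex" for x
    unfolding F_def fixed_point_iff[OF that] by simp
  have "F x \<in> prob_simplex" if x: "x \<in> prob_simplex" for x
    unfolding F_eq[OF x] using Z x
    by (intro prob_simplex_vector_matrix_mult
        appraisal_weights_in_prob_simplex[where a = a and b = b, OF P ab_range[OF x]])
      (simp_all add: doubly_stochastic_def)
  moreover have "\<exists>!u. u v* U x = u \<and> (\<Sum>i\<in>UNIV. u $ i) = 1" if "x \<in> prob_simplex" for x
    unfolding fixed_point_iff[OF that] by simp
  moreover have "G x = F x" if "x \<in> prob_simplex" for x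
    by (simp add: G_def F_eq[OF that] vector_matrix_mul_assoc matrix_mul_assoc)
  moreover have "continuous_on prob_simplex F"
  proof -
    have "continuous_on prob_simplex (\<lambda>x. a i (x $ i))"
      and "continuous_on prob_simplex (\<lambda>x. b i (x $ i))" for i
      using ab
      by (auto intro!: continuous_on_prob_simplex_nth_comp real_analytic_on_imp_continuous_on)
    then have "continuous_on prob_simplex (appraisal_weights P a b)"
      by (intro continuous_on_appraisal_weights[where a = a and b = b, OF P ab_range])
    then have "continuous_on prob_simplex (\<lambda>x. appraisal_weights P a b x v* Z x)"
      by (rule continuous_on_vector_matrix_mult[OF continuous_on_component]) (use Z_cont in blast)+
    then show ?thesis
      by (rule continuous_on_cong[THEN iffD1, rotated 2]) (simp_all add: F_eq)
  qed
  ultimately have "(\<forall>x\<in>prob_simplex. (\<exists>!u. u v* U x = u \<and> (\<Sum>i\<in>UNIV. u $ i) = 1)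
      \<and> G x = F x \<and> F x \<in> prob_simplex) \<and> continuous_on prob_simplex F"
    by blast
  then show ?thesis
    unfolding Let_def G_def U_def F_def .
qed

theorem theorem1:
  fixes P :: "real^'n::finite^'n"
  assumes n2: "CARD('n) \<ge> 2"
    and P_stoch: "row_stochastic P"
    and P_diag: "\<forall>i. P $ i $ i = 0"
    and P_range: "\<forall>i j. P $ i $ j \<in> {0..1}"
    and P_sc: "strongly_connected_mat P"
  shows
  "(\<forall>(a::'n \<Rightarrow> real \<Rightarrow> real) (b::'n \<Rightarrow> real \<Rightarrow> real) (Z::real^'n \<Rightarrow> real^'n^'n).
      (\<forall>i. real_analytic_on (a i) {0..1} \<and> real_analytic_on (b i) {0..1}
           \<and> (\<forall>t\<in>{0..1}. a i t \<in> {0..1} \<and> b i t \<in> {0..1}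
                \<and> 1 - a i t - b i t \<noteq> 0 \<and> 1 - a i t - b i t \<ge> 0))
      \<and> (\<forall>x\<in>prob_simplex. doubly_stochastic (Z x) \<and> orthogonal_matrix (Z x))
      \<and> (\<forall>i j. continuous_on prob_simplex (\<lambda>x. Z x $ i $ j))
      \<longrightarrow>
      (let G = (\<lambda>x. transpose (matrix_inv (mat 1 - diagm a x - diagm b x ** P)
                                 ** ((mat 1 - diagm a x - diagm b x) ** Z x))
                     *v (\<chi> i. 1 / real CARD('n)));
           U = (\<lambda>x. ones_outer_n - matrix_inv (mat 1 - diagm a x - diagm b x) ** diagm b x ** (mat 1 - P));
           F = (\<lambda>x. (THE u. u v* U x = u \<and> (\<Sum>i\<in>UNIV. u $ i) = 1) v* Z x)
       in (\<forall>x\<in>prob_simplex. (\<exists>!u. u v* U x = u \<and> (\<Sum>i\<in>UNIV. u $ i) = 1)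
                        \<and> G x = F x \<and> F x \<in> prob_simplex)
          \<and> continuous_on prob_simplex F))
   \<and>
   (\<forall>(a::'n \<Rightarrow> real \<Rightarrow> real) (p::real^'n).
      (\<forall>i. real_analytic_on (a i) {0..1} \<and> (\<forall>t\<in>{0..1}. a i t \<in> {0..1}))
      \<and> (\<forall>x\<in>prob_simplex. \<forall>i j. a i (x $ i) = 1 \<and> a j (x $ j) = 1 \<longrightarrow> i = j)
      \<and> p \<in> prob_simplex \<and> p v* P = p
      \<longrightarrow>
      (let F = (\<lambda>x. if \<exists>i. a i (x $ i) = 1 then axis (THE i. a i (x $ i) = 1) 1
                    else (1 / (\<Sum>j\<in>UNIV. p $ j / (1 - a j (x $ j))))
                         *\<^sub>R (\<chi> i. p $ i / (1 - a i (x $ i))))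
       in (\<forall>x\<in>prob_simplex. F x \<in> prob_simplex \<and>
             (\<forall>v\<in>prob_simplex. v v* (diagm a x + (mat 1 - diagm a x) ** P) = v \<longleftrightarrow> v = F x))
          \<and> continuous_on prob_simplex F))"
  using friedkin_johnsen_self_appraisal_map[OF P_stoch] degroot_self_appraisal_map[OF P_stoch P_sc]
  by (intro conjI allI impI; elim conjE) blast+

end
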